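(* Let $f\in\mathcal{B}$, $z\in\{\Re z\ge0\}$ and $r_z(\lambda)=(\lambda+z)^{-1}$ for $\lambda\in\mathbb{C}_+$. Then \[f(z)=f(\infty)+\frac{2}{\pi}\langle r_z,f\rangle_{\mathcal{B}}.\]
   Context: $\mathbb{C}_+=\{\Re z>0\}$. $\mathcal{B}$ is the space of holomorphic $f:\mathbb{C}_+\to\mathbb{C}$ with $\int_0^\infty\sup_{y\in\mathbb{R}}|f'(x+iy)|\,dx<\infty$; such $f$ extend continuously to $\{\Re z\ge0\}$ and $f(\infty):=\lim_{\Re z\to\infty}f(z)$ exists. $\mathcal{E}$ is the space of holomorphic $g$ on $\mathbb{C}_+$ with $\sup_{x>0}x\int_{\mathbb{R}}|g'(x+iy)|\,dy<\infty$ (it contains $r_z$ for $\Re z\ge 0$). For $g\in\mathcal{E},f\in\mathcal{B}$, $\langle g,f\rangle_{\mathcal{B}}:=\int_0^\infty x\int_{\mathbb{R}}g'(x-iy)f'(x+iy)\,dy\,dx$ (absolutely convergent). *)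

theory Defs
  imports "HOL-Analysis.Analysis"
begin

definition C_plus :: "complex set" where
  "C_plus = {z. Re z > 0}"

definition in_B :: "(complex \<Rightarrow> complex) \<Rightarrow> bool" where
  "in_B f \<longleftrightarrow> f holomorphic_on C_plus \<and>
     (\<integral>\<^sup>+ x. indicator {0<..} x *
        (SUP y\<in>(UNIV::real set). ennreal (norm (deriv f (Complex x y)))) \<partial>lborel) < \<infinity>"

definition ext_val :: "(complex \<Rightarrow> complex) \<Rightarrow> complex \<Rightarrow> complex" where
  "ext_val f z = (if Re z > 0 then f z else Lim (at z within C_plus) f)"

definition f_infty :: "(complex \<Rightarrow> complex) \<Rightarrow> complex" where
  "f_infty f = Lim (filtercomap Re at_top) f"

definition pairB :: "(complex \<Rightarrow> complex) \<Rightarrow> (complex \<Rightarrow> complex) \<Rightarrow> complex" where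
  "pairB g f = (LINT x:{0<..}|lborel. of_real x *
      (LINT y|lborel. deriv g (Complex x (- y)) * deriv f (Complex x y)))"

definition resolvent :: "complex \<Rightarrow> complex \<Rightarrow> complex" where
  "resolvent z = (\<lambda>w. inverse (w + z))"

end

theory Submission
  imports Defs "HOL-Complex_Analysis.Complex_Analysis" "HOL-Real_Asymp.Real_Asymp"
begin

(*
  For x > 0 the inner integral of the pairing is a Cauchy integral along the vertical line
  Re w = x: with p = 2x + z one has r_z'(x - iy) = -(x + iy - p)^(-2), so the inner integral equals
  2 pi f''(2x + z).  This is shown by closing the line with large rectangles, using the decay
  |f'(w)| <= C / Re w that Cauchy's inequality derives from the boundedness of f.  Therefore
  <r_z, f> = 2 pi * int_0^oo x f''(2x + z) dx, and x f''(2x + z) is the derivative of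
  x f'(2x + z) / 2 - f(2x + z) / 4.

  Everything else comes from psi(x) = sup_y |f'(x + iy)| (deriv_sup f x below): moving
  horizontally from x to x' changes f by at most the integral of psi over [x, x'], moving
  vertically by psi(x) times the distance.  This gives boundedness of f and the existence of f(oo)
  and of the boundary values of f.  Integrability of psi also forces t psi(t) to be small along
  sequences tending to 0 and to oo, so the boundary terms x f'(2x + z) vanish there and the
  integral above equals (f(z) - f(oo)) / 4.
*)

lemma Cauchy_kernel_integral:
  fixes a d :: real
  assumes a: "a > 0"
  shows "integrable lborel (\<lambda>y. 1 / (a^2 + (y - d)^2))"
    and "(\<integral>\<^sup>+y. ennreal (1 / (a^2 + (y - d)^2)) \<partial>lborel) = ennreal (pi / a)"
proof -
  let ?k = "\<lambda>y::real. 1 / (a^2 + (y - d)^2)"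
  let ?F = "\<lambda>y::real. arctan ((y - d) / a) / a"
  have pos: "a^2 + (y - d)^2 > 0" for y
    using a by (simp add: add_pos_nonneg)
  have "(?F has_real_derivative ?k y) (at y)" for y
  proof -
    have "(?F has_real_derivative inverse (1 + ((y - d) / a)^2) / (a * a)) (at y)"
      using a by (auto intro!: derivative_eq_intros)
    moreover have "1 + ((y - d) / a)^2 = (a^2 + (y - d)^2) / a^2"
      using a by (simp add: field_simps power_divide)
    ultimately show ?thesis
      using a pos[of y] by (simp add: power2_eq_square)
  qed
  moreover have "((?F \<circ> real_of_ereal) \<longlongrightarrow> - (pi/2) / a) (at_right (-\<infinity>))"
    unfolding ereal_tendsto_simps
    using a by (intro tendsto_intros filterlim_compose[OF tendsto_arctan_at_bot]) (real_asymp | simp)+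
  moreover have "((?F \<circ> real_of_ereal) \<longlongrightarrow> (pi/2) / a) (at_left \<infinity>)"
    unfolding ereal_tendsto_simps
    using a by (intro tendsto_intros filterlim_compose[OF tendsto_arctan_at_top]) (real_asymp | simp)+
  moreover have "isCont ?k y" for y
    using pos[of y] by (intro continuous_intros) auto
  moreover have "AE y in lborel. -\<infinity> < ereal y \<longrightarrow> ereal y < \<infinity> \<longrightarrow> 0 \<le> ?k y"
    using pos by (intro AE_I2) (simp add: less_imp_le)
  ultimately have "set_integrable lborel (einterval (-\<infinity>) \<infinity>) ?k"
    "(LBINT y=-\<infinity>..\<infinity>. ?k y) = (pi/2) / a - (- (pi/2) / a)"
    using interval_integral_FTC_nonneg[of "-\<infinity>" "\<infinity>" ?F ?k] by simp_all
  moreover have "einterval (-\<infinity>) \<infinity> = (UNIV :: real set)"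
    by (auto simp: einterval_def)
  ultimately have int: "integrable lborel ?k" and "integral\<^sup>L lborel ?k = pi / a"
    by (simp_all add: set_integrable_def interval_lebesgue_integral_def set_lebesgue_integral_def)
  then show "integrable lborel ?k"
    and "(\<integral>\<^sup>+y. ennreal (?k y) \<partial>lborel) = ennreal (pi / a)"
    using nn_integral_eq_integral[OF int] pos by (simp_all add: less_imp_le)
qed

lemma tendsto_set_integral_Icc:
  fixes h :: "real \<Rightarrow> 'b::{banach, second_countable_topology}"
  assumes h: "set_integrable lborel S h" and sub: "\<And>k. {a k..b k} \<subseteq> S"
    and exhaust: "\<And>x. x \<in> S \<Longrightarrow> eventually (\<lambda>k. a k \<le> x \<and> x \<le> b k) sequentially"
  shows "(\<lambda>k. LINT x:{a k..b k}|lborel. h x) \<longlonglongrightarrow> (LINT x:S|lborel. h x)"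
  unfolding set_lebesgue_integral_def
proof (rule integral_dominated_convergence)
  show "integrable lborel (\<lambda>x. indicator S x *\<^sub>R norm (h x))"
    using integrable_norm[OF h[unfolded set_integrable_def]] by simp
  show "(\<lambda>x. indicator S x *\<^sub>R h x) \<in> borel_measurable lborel"
    using h by (simp add: set_integrable_def)
  show "(\<lambda>x. indicator {a k..b k} x *\<^sub>R h x) \<in> borel_measurable lborel" for k
    using set_integrable_subset[OF h _ sub[of k]] by (simp add: set_integrable_def)
  show "AE x in lborel. norm (indicator {a k..b k} x *\<^sub>R h x) \<le> indicator S x *\<^sub>R norm (h x)" for k
    using sub[of k] by (intro AE_I2) (auto split: split_indicator)
  show "AE x in lborel. (\<lambda>k. indicator {a k..b k} x *\<^sub>R h x) \<longlonglongrightarrow> indicator S x *\<^sub>R h x"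
  proof (intro AE_I2 tendsto_eventually)
    fix x
    show "\<forall>\<^sub>F k in sequentially. indicator {a k..b k} x *\<^sub>R h x = indicator S x *\<^sub>R h x"
    proof (cases "x \<in> S")
      case True
      show ?thesis
        using exhaust[OF True] by (rule eventually_mono) (simp add: indicator_def True)
    next
      case False
      then show ?thesis
        using sub by (intro always_eventually) (fastforce simp: indicator_def)
    qed
  qed
qed

lemma nn_integral_indicator_decseq_small:
  fixes g :: "'a \<Rightarrow> ennreal"
  assumes g: "g \<in> borel_measurable M" "(\<integral>\<^sup>+x. g x \<partial>M) < \<infinity>"
    and A: "decseq A" "\<And>i. A i \<in> sets M" "(\<Inter>i. A i) = {}" and "e > 0"
  shows "\<exists>i. (\<integral>\<^sup>+x. g x * indicator (A i) x \<partial>M) < e"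
proof -
  have "(INF i. \<integral>\<^sup>+x. g x * indicator (A i) x \<partial>M) = (\<integral>\<^sup>+x. (INF i. g x * indicator (A i) x) \<partial>M)"
  proof (rule nn_integral_monotone_convergence_INF_decseq[symmetric])
    show "decseq (\<lambda>i x. g x * indicator (A i) x)"
    proof (intro decseq_SucI le_funI)
      fix i x
      show "g x * indicator (A (Suc i)) x \<le> g x * indicator (A i) x"
        using decseq_SucD[OF A(1), of i] by (intro mult_left_mono) (auto split: split_indicator)
    qed
    show "(\<lambda>x. g x * indicator (A i) x) \<in> borel_measurable M" for i
      using g(1) A(2) by measurable
    show "(\<integral>\<^sup>+x. g x * indicator (A i) x \<partial>M) < \<infinity>" for i
      using g(2) by (rule le_less_trans[rotated]) (intro nn_integral_mono, simp add: indicator_def)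
  qed
  also have "(\<lambda>x. INF i. g x * indicator (A i) x) = (\<lambda>x. 0)"
  proof
    fix x
    obtain i where "x \<notin> A i"
      using A(3) by blast
    then show "(INF i. g x * indicator (A i) x) = 0"
      by (intro antisym INF_lower2[of i]) auto
  qed
  finally have "(INF i. \<integral>\<^sup>+x. g x * indicator (A i) x \<partial>M) < e"
    using \<open>e > 0\<close> by simp
  then show ?thesis
    by (simp add: INF_less_iff)
qed

lemma nn_integral_lower_bound_ln:
  fixes g :: "real \<Rightarrow> ennreal"
  assumes "0 < a" "a \<le> b" "0 \<le> e" and bound: "\<And>t. a \<le> t \<Longrightarrow> t \<le> b \<Longrightarrow> ennreal e \<le> g t * ennreal t"
  shows "ennreal (e * (ln b - ln a)) \<le> (\<integral>\<^sup>+t. g t \<partial>lborel)"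
proof -
  have "((\<lambda>t. e / t) has_integral (e * ln b - e * ln a)) {a..b}"
  proof (rule fundamental_theorem_of_calculus[OF \<open>a \<le> b\<close>])
    fix t assume "t \<in> {a..b}"
    then show "((\<lambda>t. e * ln t) has_vector_derivative e / t) (at t within {a..b})"
      using \<open>0 < a\<close> by (auto intro!: derivative_eq_intros
          simp: has_real_derivative_iff_has_vector_derivative[symmetric])
  qed
  then have "ennreal (e * (ln b - ln a)) = (\<integral>\<^sup>+t. ennreal (e / t) * indicator {a..b} t \<partial>lborel)"
    using assms(1-3) by (subst nn_integral_has_integral_lebesgue') (auto simp: algebra_simps)
  also have "\<dots> \<le> (\<integral>\<^sup>+t. g t \<partial>lborel)"
  proof (intro nn_integral_mono)
    fix t
    show "ennreal (e / t) * indicator {a..b} t \<le> g t"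
    proof (cases "t \<in> {a..b}")
      case True
      then have t: "0 < t"
        using \<open>0 < a\<close> by auto
      have "ennreal t * ennreal (e / t) = ennreal e"
        using t \<open>0 \<le> e\<close> by (simp add: ennreal_mult[symmetric])
      also have "\<dots> \<le> ennreal t * g t"
        using True bound by (auto simp: mult.commute)
      finally show ?thesis
        using True t by (simp add: ennreal_mult_le_mult_iff)
    qed simp
  qed
  finally show ?thesis .
qed

lemma exists_point_small_product:
  fixes g :: "real \<Rightarrow> ennreal"
  assumes fin: "(\<integral>\<^sup>+x. g x \<partial>lborel) < \<infinity>" and "e > 0" "a > 0"
  shows "\<exists>t. a \<le> t \<and> t \<le> a * exp (enn2real (\<integral>\<^sup>+x. g x \<partial>lborel) / e + 1) \<and>
           g t * ennreal t < ennreal e"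
proof (rule ccontr)
  define B where "B = enn2real (\<integral>\<^sup>+x. g x \<partial>lborel)"
  define M where "M = B / e + 1"
  assume "\<not> ?thesis"
  then have "ennreal e \<le> g t * ennreal t" if "a \<le> t" "t \<le> a * exp M" for t
    using that unfolding M_def B_def by (auto simp: not_less)
  then have "ennreal (e * (ln (a * exp M) - ln a)) \<le> (\<integral>\<^sup>+x. g x \<partial>lborel)"
    using \<open>e > 0\<close> \<open>a > 0\<close> by (intro nn_integral_lower_bound_ln) (auto simp: M_def B_def)
  also have "\<dots> = ennreal B"
    using fin unfolding B_def by (simp add: ennreal_enn2real_if less_top)
  finally have "e * M \<le> B"
    using \<open>a > 0\<close> by (simp add: ln_mult ennreal_le_iff B_def)
  moreover have "e * M = B + e"
    unfolding M_def using \<open>e > 0\<close> by (simp add: field_simps)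
  ultimately show False
    using \<open>e > 0\<close> by simp
qed

lemma exists_large_point_small_product:
  fixes g :: "real \<Rightarrow> ennreal"
  assumes "(\<integral>\<^sup>+x. g x \<partial>lborel) < \<infinity>" and "e > 0"
  shows "\<exists>t\<ge>N. g t * ennreal t < ennreal e"
  using exists_point_small_product[OF assms, of "max N 1"] by force

lemma exists_small_point_small_product:
  fixes g :: "real \<Rightarrow> ennreal"
  assumes "(\<integral>\<^sup>+x. g x \<partial>lborel) < \<infinity>" and "e > 0" "d > 0"
  shows "\<exists>t. 0 < t \<and> t < d \<and> g t * ennreal t < ennreal e"
proof -
  define M where "M = enn2real (\<integral>\<^sup>+x. g x \<partial>lborel) / e + 1"
  define a where "a = d / 2 * exp (- M)"
  have "a > 0" "a * exp M = d / 2"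
    using \<open>d > 0\<close> by (simp_all add: a_def exp_minus)
  then obtain t where "a \<le> t" "t \<le> d / 2" "g t * ennreal t < ennreal e"
    using exists_point_small_product[OF assms(1,2) \<open>a > 0\<close>] unfolding M_def by auto
  then show ?thesis
    using \<open>a > 0\<close> \<open>d > 0\<close> by (intro exI[of _ t]) auto
qed

lemma SUP_Rats_continuous:
  fixes h :: "real \<Rightarrow> 'a::{complete_linorder, linorder_topology}"
  assumes "continuous_on UNIV h"
  shows "(SUP y\<in>\<rat>. h y) = (SUP y. h y)"
proof (rule antisym)
  show "(SUP y\<in>\<rat>. h y) \<le> (SUP y. h y)"
    by (rule SUP_subset_mono) auto
  show "(SUP y. h y) \<le> (SUP y\<in>\<rat>. h y)"
  proof (rule SUP_least)
    fix y :: real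
    show "h y \<le> (SUP y\<in>\<rat>. h y)"
    proof (cases "y \<in> \<rat>")
      case False
      then have "y islimpt \<rat>"
        using Rats_closure_real by (auto simp: closure_def)
      moreover have "(h \<longlongrightarrow> h y) (at y within \<rat>)"
        using assms unfolding continuous_on_def by (blast intro: tendsto_within_subset)
      moreover have "\<forall>\<^sub>F x in at y within \<rat>. h x \<le> (SUP y\<in>\<rat>. h y)"
        by (simp add: eventually_at_filter SUP_upper)
      ultimately show ?thesis
        by (intro tendsto_upperbound[of h]) (auto simp: trivial_limit_within)
    qed (rule SUP_upper)
  qed
qed

lemma tendsto_Lim_Cauchy:
  fixes g :: "'a \<Rightarrow> 'b::complete_space"
  assumes "F \<noteq> bot"
    and Cauchy: "\<And>e. e > 0 \<Longrightarrow> \<exists>P. eventually P F \<and> (\<forall>x y. P x \<and> P y \<longrightarrow> dist (g x) (g y) < e)"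
  shows "(g \<longlongrightarrow> Lim F g) F"
proof -
  have "cauchy_filter (filtermap g F)"
    using Cauchy by (simp add: cauchy_filter_metric_filtermap)
  then obtain c where "filtermap g F \<le> nhds c"
    using cauchy_filter_complete_converges[OF _ complete_UNIV] \<open>F \<noteq> bot\<close> by fastforce
  then have "(g \<longlongrightarrow> c) F"
    by (simp add: filterlim_def)
  then show ?thesis
    using \<open>F \<noteq> bot\<close> by (simp add: tendsto_Lim)
qed

lemma C_plus_iff [simp]: "w \<in> C_plus \<longleftrightarrow> Re w > 0"
  unfolding C_plus_def by simp

lemma open_C_plus: "open C_plus"
  unfolding C_plus_def by (simp add: open_halfspace_Re_gt)

lemma convex_C_plus: "convex C_plus"
  unfolding C_plus_def by (simp add: convex_halfspace_Re_gt)

lemma has_vector_derivative_horizontal_line: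
  "((\<lambda>u::real. Complex u y) has_vector_derivative 1) (at u)"
proof -
  have "(\<lambda>u::real. Complex u y) = (\<lambda>u. of_real u + Complex 0 y)"
    by (auto simp: complex_eq_iff)
  then show ?thesis
    using has_vector_derivative_real_field[of "\<lambda>w. w + Complex 0 y" 1 u]
    by (auto intro!: derivative_eq_intros)
qed

lemma has_contour_integral_vertical_linepath:
  assumes ab: "a < b" and I: "((\<lambda>y. G (Complex x y)) has_integral I) {a..b}"
  shows "(G has_contour_integral (\<i> * I)) (linepath (Complex x a) (Complex x b))"
proof -
  have m: "b - a > 0"
    using ab by simp
  have "((\<lambda>t. G (Complex x ((b - a) *\<^sub>R t + a))) has_integral (I /\<^sub>R (b - a) ^ DIM(real)))
          (cbox ((a - a) /\<^sub>R (b - a)) ((b - a) /\<^sub>R (b - a)))"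
    using has_integral_affinity_iff[OF m, where f="\<lambda>y. G (Complex x y)" and I=I and c=a and a=a and b=b] I
    by simp
  then have "((\<lambda>t. G (Complex x ((b - a) * t + a)) * (\<i> * of_real (b - a))) has_integral
      (I /\<^sub>R (b - a)) * (\<i> * of_real (b - a))) {0..1}"
    using m by (intro has_integral_mult_left) simp
  moreover have "(I /\<^sub>R (b - a)) * (\<i> * of_real (b - a)) = \<i> * I"
    using m by (simp add: scaleR_conv_of_real field_simps)
  moreover have "linepath (Complex x a) (Complex x b) t = Complex x ((b - a) * t + a)" for t
    by (simp add: linepath_def complex_eq_iff algebra_simps)
  moreover have "Complex x b - Complex x a = \<i> * of_real (b - a)"
    by (simp add: complex_eq_iff)
  ultimately show ?thesis
    unfolding has_contour_integral_linepath by simp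
qed

lemma Cauchy_integral_formula_deriv_convex:
  assumes S: "open S" "convex S" and g: "g holomorphic_on S" and "p \<in> S"
    and \<gamma>: "valid_path \<gamma>" "pathfinish \<gamma> = pathstart \<gamma>" "path_image \<gamma> \<subseteq> S - {p}"
  shows "((\<lambda>w. g w / (w - p)^2) has_contour_integral
           (2 * pi * \<i> * winding_number \<gamma> p * deriv g p)) \<gamma>"
proof -
  have g': "deriv g holomorphic_on S"
    using g S(1) by (rule holomorphic_deriv)
  have prim: "((\<lambda>w. deriv g w / (w - p) - g w / (w - p)^2) has_contour_integral 0) \<gamma>"
  proof (rule Cauchy_theorem_primitive[where f = "\<lambda>w. g w / (w - p)"])
    fix w assume w: "w \<in> S - {p}"
    then have "(g has_field_derivative deriv g w) (at w)"
      using g S(1) by (auto intro: holomorphic_derivI)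
    then have "((\<lambda>w. g w / (w - p)) has_field_derivative
        (deriv g w * (w - p) - g w) / ((w - p) * (w - p))) (at w)"
      using w by (auto intro!: derivative_eq_intros)
    moreover have "(deriv g w * (w - p) - g w) / ((w - p) * (w - p)) =
        deriv g w / (w - p) - g w / (w - p)^2"
      using w by (simp add: diff_divide_distrib power2_eq_square)
    ultimately show "((\<lambda>w. g w / (w - p)) has_field_derivative
        deriv g w / (w - p) - g w / (w - p)^2) (at w within S - {p})"
      by (simp add: has_field_derivative_at_within)
  qed (use \<gamma> in auto)
  have "((\<lambda>w. deriv g w / (w - p)) has_contour_integral
      (2 * pi * \<i> * winding_number \<gamma> p * deriv g p)) \<gamma>"
    using S \<gamma> \<open>p \<in> S\<close> by (intro Cauchy_integral_formula_convex_simple[OF S(2) g']) (auto simp: interior_open)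
  from has_contour_integral_diff[OF this prim] show ?thesis
    by simp
qed

lemma norm_deriv_le_half_plane:
  assumes g: "g holomorphic_on C_plus" and M: "\<And>w. Re w > 0 \<Longrightarrow> norm (g w) \<le> M"
    and w: "Re w > 0"
  shows "norm (deriv g w) \<le> 2 * M / Re w"
proof -
  define r where "r = Re w / 2"
  have r: "r > 0"
    using w r_def by simp
  have sub: "cball w r \<subseteq> C_plus"
  proof
    fix v assume "v \<in> cball w r"
    then have "Re w - Re v \<le> r"
      using abs_Re_le_cmod[of "w - v"] by (simp add: dist_norm)
    then show "v \<in> C_plus"
      using r_def w by simp
  qed
  have "norm ((deriv ^^ 1) g w) \<le> fact 1 * M / r ^ 1"
  proof (rule Cauchy_inequality)
    show "g holomorphic_on ball w r"
      using g sub ball_subset_cball by (blast intro: holomorphic_on_subset)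
    show "continuous_on (cball w r) g"
      using holomorphic_on_imp_continuous_on[OF g] sub by (rule continuous_on_subset)
    show "norm (g v) \<le> M" if "norm (w - v) = r" for v
      using that sub M by (auto simp: dist_norm)
  qed (rule r)
  then show ?thesis
    unfolding r_def by (simp add: mult.commute)
qed

lemma deriv_resolvent:
  assumes "w + z \<noteq> 0"
  shows "deriv (resolvent z) w = - inverse ((w + z)^2)"
proof -
  have "(resolvent z has_field_derivative - inverse ((w + z)^2)) (at w)"
    unfolding resolvent_def using assms
    by (auto intro!: derivative_eq_intros simp: power2_eq_square inverse_mult_distrib)
  then show ?thesis
    by (rule DERIV_imp_deriv)
qed

section \<open>Cauchy integrals along vertical lines\<close>

context
  fixes g :: "complex \<Rightarrow> complex" and C :: real
  assumes g_holomorphic: "g holomorphic_on C_plus"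
    and g_decay: "\<And>w. Re w > 0 \<Longrightarrow> norm (g w) \<le> C / Re w"
begin

lemma decay_constant_nonneg: "0 \<le> C"
  using g_decay[of 1] norm_ge_zero[of "g 1"] by (simp del: norm_ge_zero)

lemma rectangle_Cauchy_integral_edges:
  fixes x R :: real and p :: complex
  defines "F \<equiv> \<lambda>w. g w / (w - p)^2"
    and "a1 \<equiv> Complex x (-R)" and "a2 \<equiv> Complex R (-R)" and "a3 \<equiv> Complex R R" and "a4 \<equiv> Complex x R"
  assumes "0 < x" and p: "p \<in> box a1 a3"
  shows "F contour_integrable_on linepath a1 a2" "F contour_integrable_on linepath a2 a3"
    "F contour_integrable_on linepath a3 a4" "F contour_integrable_on linepath a4 a1"
    and "contour_integral (linepath a1 a2) F + contour_integral (linepath a2 a3) F +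
      contour_integral (linepath a3 a4) F + contour_integral (linepath a4 a1) F = 2 * pi * \<i> * deriv g p"
proof -
  have "path_image (rectpath a1 a3) \<subseteq> C_plus - {p}"
    using path_image_rectpath_subset_cbox[of a1 a3] path_image_rectpath_inter_box[of a1 a3] p \<open>0 < x\<close>
    by (fastforce simp: a1_def a3_def in_cbox_complex_iff in_box_complex_iff)
  then have "(F has_contour_integral
      (2 * pi * \<i> * winding_number (rectpath a1 a3) p * deriv g p)) (rectpath a1 a3)"
    using p \<open>0 < x\<close> unfolding F_def
    by (intro Cauchy_integral_formula_deriv_convex[OF open_C_plus convex_C_plus g_holomorphic])
      (auto simp: a1_def in_box_complex_iff)
  then have "(F has_contour_integral (2 * pi * \<i> * deriv g p)) (rectpath a1 a3)"
    using winding_number_rectpath[OF p] by simp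
  then have rect: "F contour_integrable_on rectpath a1 a3"
    "contour_integral (rectpath a1 a3) F = 2 * pi * \<i> * deriv g p"
    using has_contour_integral_integrable contour_integral_unique by blast+
  then show "F contour_integrable_on linepath a1 a2" "F contour_integrable_on linepath a2 a3"
    "F contour_integrable_on linepath a3 a4" "F contour_integrable_on linepath a4 a1"
    by (simp_all add: rectpath_def Let_def a1_def a2_def a3_def a4_def)
  with rect show "contour_integral (linepath a1 a2) F + contour_integral (linepath a2 a3) F +
      contour_integral (linepath a3 a4) F + contour_integral (linepath a4 a1) F = 2 * pi * \<i> * deriv g p"
    by (simp add: rectpath_def Let_def a1_def a2_def a3_def a4_def add.assoc)
qed

lemma norm_contour_integral_Cauchy_linepath_le:
  assumes int: "(\<lambda>w. g w / (w - p)^2) contour_integrable_on linepath u v" and "0 < c" "0 < r"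
    and uv: "\<And>w. w \<in> closed_segment u v \<Longrightarrow> c \<le> Re w \<and> r \<le> norm (w - p)"
    and "norm (v - u) \<le> L"
  shows "norm (contour_integral (linepath u v) (\<lambda>w. g w / (w - p)^2)) \<le> C / (c * r^2) * L"
proof -
  have "0 \<le> C / (c * r^2)"
    using decay_constant_nonneg \<open>0 < c\<close> by simp
  moreover have "norm (g w / (w - p)^2) \<le> C / (c * r^2)" if "w \<in> closed_segment u v" for w
  proof -
    have w: "c \<le> Re w" "r \<le> norm (w - p)"
      using uv that by auto
    have "norm (g w) \<le> C / c"
      using g_decay[of w] w \<open>0 < c\<close> decay_constant_nonneg by (smt (verit) frac_le)
    moreover have "r^2 \<le> norm (w - p)^2"
      using w \<open>0 < r\<close> by (intro power_mono) auto
    ultimately have "norm (g w) / norm (w - p)^2 \<le> (C / c) / r^2"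
      using \<open>0 < c\<close> \<open>0 < r\<close> decay_constant_nonneg by (intro frac_le) auto
    then show ?thesis
      by (simp add: norm_divide norm_power)
  qed
  ultimately have "norm (contour_integral (linepath u v) (\<lambda>w. g w / (w - p)^2))
      \<le> C / (c * r^2) * norm (v - u)"
    using int by (intro contour_integral_bound_linepath) auto
  also have "\<dots> \<le> C / (c * r^2) * L"
    using \<open>0 \<le> C / (c * r^2)\<close> \<open>norm (v - u) \<le> L\<close> by (rule mult_left_mono[rotated])
  finally show ?thesis .
qed

lemma rectangle_outer_edges_estimate:
  fixes x R :: real and p :: complex
  defines "F \<equiv> \<lambda>w. g w / (w - p)^2"
    and "a1 \<equiv> Complex x (-R)" and "a2 \<equiv> Complex R (-R)" and "a3 \<equiv> Complex R R" and "a4 \<equiv> Complex x R"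
  assumes x: "0 < x" "x < Re p" and R: "2 * (\<bar>Re p\<bar> + \<bar>Im p\<bar> + x + 1) \<le> R"
  shows "norm (contour_integral (linepath a1 a2) F) + norm (contour_integral (linepath a2 a3) F) +
      norm (contour_integral (linepath a3 a4) F) \<le> (8 * C / x + 8 * C) / R"
proof -
  have R1: "1 \<le> R" "x < R" "R/2 \<le> R - \<bar>Im p\<bar>" "R/2 \<le> R - Re p"
    using R x by auto
  have "p \<in> box a1 a3"
    using R1 x by (auto simp: in_box_complex_iff a1_def a3_def)
  note edges = rectangle_Cauchy_integral_edges[OF x(1) this[unfolded a1_def a3_def],
      folded F_def a1_def a2_def a3_def a4_def, unfolded F_def]
  have horizontal: "x \<le> Re w \<and> R / 2 \<le> norm (w - p)"
    if "w \<in> closed_segment a1 a2 \<union> closed_segment a3 a4" for w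
  proof -
    have "x \<le> Re w" "\<bar>Im w\<bar> = R"
      using that R1 by (auto simp: a1_def a2_def a3_def a4_def closed_segment_same_Im closed_segment_eq_real_ivl)
    then show ?thesis
      using R1 abs_Im_le_cmod[of "w - p"] by auto
  qed
  have vertical: "R \<le> Re w \<and> R / 2 \<le> norm (w - p)" if "w \<in> closed_segment a2 a3" for w
  proof -
    have "Re w = R"
      using that by (auto simp: a2_def a3_def closed_segment_same_Re)
    then show ?thesis
      using R1 abs_Re_le_cmod[of "w - p"] by auto
  qed
  have "a3 - a2 = \<i> * of_real (2 * R)"
    by (simp add: a2_def a3_def complex_eq_iff)
  then have "norm (a3 - a2) \<le> 2 * R"
    using R1 by (simp add: norm_mult)
  moreover have "norm (a2 - a1) \<le> R" "norm (a4 - a3) \<le> R"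
    using R1 x by (auto simp: a1_def a2_def a3_def a4_def cmod_def)
  ultimately have "norm (contour_integral (linepath a1 a2) F) \<le> C / (x * (R / 2)^2) * R"
    "norm (contour_integral (linepath a3 a4) F) \<le> C / (x * (R / 2)^2) * R"
    "norm (contour_integral (linepath a2 a3) F) \<le> C / (R * (R / 2)^2) * (2 * R)"
    unfolding F_def using x R1 horizontal vertical
    by (intro norm_contour_integral_Cauchy_linepath_le edges; simp)+
  moreover have "C / (x * (R / 2)^2) * R = 4 * C / x / R"
    using R1 x by (simp add: field_simps power2_eq_square)
  moreover have "C / (R * (R / 2)^2) * (2 * R) \<le> 8 * C / R"
    using R1 decay_constant_nonneg by (simp add: field_simps power2_eq_square mult_le_cancel_left1)
  ultimately have "norm (contour_integral (linepath a1 a2) F) + norm (contour_integral (linepath a2 a3) F) +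
      norm (contour_integral (linepath a3 a4) F) \<le> 4 * C / x / R + 8 * C / R + 4 * C / x / R"
    by linarith
  also have "\<dots> = (8 * C / x + 8 * C) / R"
    by (simp add: add_divide_distrib)
  finally show ?thesis .
qed

lemma continuous_on_vertical_Cauchy_integrand:
  assumes "0 < x" "x < Re p"
  shows "continuous_on UNIV (\<lambda>y. g (Complex x y) / (Complex x y - p)^2)"
proof -
  have "Complex x y - p \<noteq> 0" for y
    using assms by (auto simp: complex_eq_iff)
  then have "(Complex x y - p)^2 \<noteq> 0" for y
    by simp
  then show ?thesis
    using assms
    by (intro continuous_intros continuous_on_compose2[OF holomorphic_on_imp_continuous_on[OF g_holomorphic]])
      auto
qed

lemma vertical_truncation_estimate:
  assumes x: "0 < x" "x < Re p" and R: "2 * (\<bar>Re p\<bar> + \<bar>Im p\<bar> + x + 1) \<le> R"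
  shows "norm (integral {-R..R} (\<lambda>y. g (Complex x y) / (Complex x y - p)^2) + 2 * pi * deriv g p)
           \<le> (8 * C / x + 8 * C) / R"
proof -
  define F where "F = (\<lambda>w. g w / (w - p)^2)"
  define I where "I = integral {-R..R} (\<lambda>y. F (Complex x y))"
  define a1 a2 a3 a4 where "a1 = Complex x (-R)" and "a2 = Complex R (-R)"
    and "a3 = Complex R R" and "a4 = Complex x R"
  have "p \<in> box a1 a3"
    using R x by (auto simp: in_box_complex_iff a1_def a3_def)
  note edges = rectangle_Cauchy_integral_edges[OF x(1) this[unfolded a1_def a3_def],
      folded F_def a1_def a2_def a3_def a4_def]
  have "continuous_on {-R..R} (\<lambda>y. F (Complex x y))"
    unfolding F_def using continuous_on_vertical_Cauchy_integrand[OF x] by (rule continuous_on_subset) simp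
  then have "(F has_contour_integral (\<i> * I)) (linepath a1 a4)"
    unfolding I_def a1_def a4_def using R x
    by (intro has_contour_integral_vertical_linepath integrable_integral integrable_continuous_real) auto
  then have "contour_integral (linepath a4 a1) F = - (\<i> * I)"
    by (intro contour_integral_unique has_contour_integral_reverse_linepath)
  then have "\<i> * (I + 2 * pi * deriv g p) = contour_integral (linepath a1 a2) F +
      contour_integral (linepath a2 a3) F + contour_integral (linepath a3 a4) F"
    using edges(5) by (simp add: algebra_simps)
  from arg_cong[OF this, of norm]
  have "norm (I + 2 * pi * deriv g p) = norm (contour_integral (linepath a1 a2) F +
      contour_integral (linepath a2 a3) F + contour_integral (linepath a3 a4) F)"
    by (simp add: norm_mult)
  also have "\<dots> \<le> norm (contour_integral (linepath a1 a2) F) +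
      norm (contour_integral (linepath a2 a3) F) + norm (contour_integral (linepath a3 a4) F)"
    by (rule order_trans[OF norm_triangle_ineq add_right_mono[OF norm_triangle_ineq]])
  also have "\<dots> \<le> (8 * C / x + 8 * C) / R"
    unfolding F_def a1_def a2_def a3_def a4_def by (rule rectangle_outer_edges_estimate[OF x R])
  finally show ?thesis
    unfolding I_def F_def .
qed

lemma integrable_vertical_Cauchy_integrand:
  assumes x: "0 < x" "x < Re p"
  shows "integrable lborel (\<lambda>y. g (Complex x y) / (Complex x y - p)^2)"
proof (rule Bochner_Integration.integrable_bound)
  define a where "a = Re p - x"
  have a: "a > 0"
    using x by (simp add: a_def)
  show "integrable lborel (\<lambda>y. C / x * (1 / (a^2 + (y - Im p)^2)))"
    using Cauchy_kernel_integral(1)[OF a] by (rule integrable_mult_right)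
  show "(\<lambda>y. g (Complex x y) / (Complex x y - p)^2) \<in> borel_measurable lborel"
    using continuous_on_vertical_Cauchy_integrand[OF x] by (simp add: borel_measurable_continuous_onI)
  have "norm (g (Complex x y) / (Complex x y - p)^2) \<le> norm (C / x * (1 / (a^2 + (y - Im p)^2)))" for y
  proof -
    have "norm (Complex x y - p)^2 = a^2 + (y - Im p)^2"
      unfolding a_def by (simp add: cmod_power2 power2_commute)
    moreover have "norm (g (Complex x y)) \<le> C / x"
      using g_decay[of "Complex x y"] x by simp
    moreover have "a^2 + (y - Im p)^2 > 0"
      using a by (simp add: add_pos_nonneg)
    ultimately show ?thesis
      using divide_right_mono[of "norm (g (Complex x y))" "C / x" "a^2 + (y - Im p)^2"]
        decay_constant_nonneg x
      by (simp add: norm_divide norm_power abs_mult)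
  qed
  then show "AE y in lborel. norm (g (Complex x y) / (Complex x y - p)^2)
      \<le> norm (C / x * (1 / (a^2 + (y - Im p)^2)))"
    by simp
qed

lemma vertical_line_Cauchy_integral:
  assumes x: "0 < x" "x < Re p"
  shows "(LINT y|lborel. g (Complex x y) / (Complex x y - p)^2) = - 2 * pi * deriv g p"
proof -
  define G where "G = (\<lambda>y. g (Complex x y) / (Complex x y - p)^2)"
  define R where "R = (\<lambda>k::nat. 2 * (\<bar>Re p\<bar> + \<bar>Im p\<bar> + x + 1) + real k)"
  have "(\<lambda>k. LINT y:{-R k..R k}|lborel. G y) \<longlonglongrightarrow> (LINT y:UNIV|lborel. G y)"
  proof (rule tendsto_set_integral_Icc)
    show "set_integrable lborel UNIV G"
      using integrable_vertical_Cauchy_integrand[OF x] by (simp add: set_integrable_def G_def)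
    show "\<forall>\<^sub>F k in sequentially. - R k \<le> y \<and> y \<le> R k" for y
      using eventually_ge_at_top[of "nat \<lceil>\<bar>y\<bar>\<rceil>"]
      by (rule eventually_mono) (use x in \<open>auto simp: R_def\<close>)
  qed simp
  moreover have "(LINT y:{-R k..R k}|lborel. G y) = integral {-R k..R k} G" for k
    using continuous_on_vertical_Cauchy_integrand[OF x] unfolding G_def
    by (intro set_borel_integral_eq_integral(2) borel_integrable_atLeastAtMost')
      (auto intro: continuous_on_subset)
  moreover have "(\<lambda>k. integral {-R k..R k} G + 2 * pi * deriv g p) \<longlonglongrightarrow> 0"
  proof (rule Lim_null_comparison)
    show "\<forall>\<^sub>F k in sequentially. norm (integral {-R k..R k} G + 2 * pi * deriv g p)
        \<le> (8 * C / x + 8 * C) / R k"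
      unfolding G_def by (intro always_eventually allI vertical_truncation_estimate[OF x]) (simp add: R_def)
    show "(\<lambda>k. (8 * C / x + 8 * C) / R k) \<longlonglongrightarrow> 0"
      unfolding R_def by real_asymp
  qed
  then have "(\<lambda>k. integral {-R k..R k} G) \<longlonglongrightarrow> - 2 * pi * deriv g p"
    using tendsto_diff[OF _ tendsto_const[of "2 * pi * deriv g p"]] by force
  ultimately show ?thesis
    unfolding G_def[symmetric] using LIMSEQ_unique by (simp add: set_lebesgue_integral_def)
qed

end

section \<open>Functions of class B\<close>

definition deriv_sup :: "(complex \<Rightarrow> complex) \<Rightarrow> real \<Rightarrow> ennreal" where
  "deriv_sup f x = indicator {0<..} x * (SUP y. ennreal (norm (deriv f (Complex x y))))"

lemma in_B_iff: "in_B f \<longleftrightarrow> f holomorphic_on C_plus \<and> (\<integral>\<^sup>+x. deriv_sup f x \<partial>lborel) < \<infinity>"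
  unfolding in_B_def deriv_sup_def ..

lemma norm_deriv_le_deriv_sup:
  "x > 0 \<Longrightarrow> ennreal (norm (deriv f (Complex x y))) \<le> deriv_sup f x"
  unfolding deriv_sup_def by (auto intro: SUP_upper)

locale B_function =
  fixes f :: "complex \<Rightarrow> complex"
  assumes in_B: "in_B f"
begin

lemma holomorphic: "f holomorphic_on C_plus"
  using in_B by (simp add: in_B_iff)

lemma deriv_sup_finite: "(\<integral>\<^sup>+x. deriv_sup f x \<partial>lborel) < \<infinity>"
  using in_B by (simp add: in_B_iff)

lemma deriv_holomorphic: "deriv f holomorphic_on C_plus"
  using holomorphic open_C_plus by (rule holomorphic_deriv)

lemma f_has_field_derivative: "Re w > 0 \<Longrightarrow> (f has_field_derivative deriv f w) (at w)"
  using holomorphic open_C_plus by (auto intro: holomorphic_derivI)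

lemma deriv_has_field_derivative:
  "Re w > 0 \<Longrightarrow> (deriv f has_field_derivative deriv (deriv f) w) (at w)"
  using deriv_holomorphic open_C_plus by (auto intro: holomorphic_derivI)

lemma f_isCont: "Re w > 0 \<Longrightarrow> isCont f w"
  using holomorphic_on_imp_continuous_on[OF holomorphic] open_C_plus
  by (simp add: continuous_on_eq_continuous_at)

lemma continuous_on_deriv_compose:
  assumes "continuous_on S h" "\<And>s. s \<in> S \<Longrightarrow> Re (h s) > 0"
  shows "continuous_on S (\<lambda>s. deriv f (h s))" "continuous_on S (\<lambda>s. deriv (deriv f) (h s))"
proof -
  have "continuous_on C_plus (deriv f)" "continuous_on C_plus (deriv (deriv f))"
    using deriv_holomorphic holomorphic_deriv[OF deriv_holomorphic open_C_plus]
    by (simp_all add: holomorphic_on_imp_continuous_on)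
  then show "continuous_on S (\<lambda>s. deriv f (h s))" "continuous_on S (\<lambda>s. deriv (deriv f) (h s))"
    using assms(2) by (auto intro!: continuous_on_compose2[OF _ assms(1)])
qed

lemma deriv_sup_measurable [measurable]: "deriv_sup f \<in> borel_measurable lborel"
proof -
  have "deriv_sup f x = (SUP y\<in>\<rat>. indicator {0<..} x * ennreal (norm (deriv f (Complex x y))))"
    for x
  proof (cases "x > 0")
    case True
    have "continuous_on UNIV (\<lambda>y. deriv f (Complex x y))"
      by (rule continuous_on_deriv_compose(1)) (use True in \<open>auto intro!: continuous_intros\<close>)
    then have "continuous_on UNIV (\<lambda>y. ennreal (norm (deriv f (Complex x y))))"
      by (intro continuous_on_ennreal continuous_on_norm)
    then show ?thesis
      using True by (simp add: deriv_sup_def SUP_Rats_continuous)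
  qed (use Rats_0 in \<open>auto simp: deriv_sup_def SUP_constant\<close>)
  then have "deriv_sup f = (\<lambda>x. SUP y\<in>\<rat>. indicator {0<..} x * ennreal (norm (deriv f (Complex x y))))"
    by (rule ext)
  moreover have "(\<lambda>x. indicator {0<..} x * ennreal (norm (deriv f (Complex x y)))) \<in> borel_measurable lborel"
    for y :: real
  proof -
    have "continuous_on {0<..} (\<lambda>x. deriv f (Complex x y))"
      by (rule continuous_on_deriv_compose(1)) (auto intro!: continuous_intros)
    then have "(\<lambda>x. indicator {0<..} x *\<^sub>R deriv f (Complex x y)) \<in> borel_measurable borel"
      by (rule borel_measurable_continuous_on_indicator[rotated]) simp
    then have "(\<lambda>x. ennreal (norm (indicator {0<..} x *\<^sub>R deriv f (Complex x y)))) \<in> borel_measurable lborel"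
      by measurable
    moreover have "(\<lambda>x. ennreal (norm (indicator {0<..} x *\<^sub>R deriv f (Complex x y)))) =
        (\<lambda>x. indicator {0<..} x * ennreal (norm (deriv f (Complex x y))))"
      by (auto simp: indicator_def)
    ultimately show ?thesis
      by metis
  qed
  ultimately show ?thesis
    by (simp add: countable_rat)
qed

lemma norm_diff_horizontal_le_nn_integral:
  assumes "0 < s" "s \<le> t"
  shows "ennreal (norm (f (Complex t y) - f (Complex s y)))
           \<le> (\<integral>\<^sup>+u. deriv_sup f u * indicator {s..t} u \<partial>lborel)"
proof -
  let ?G = "\<lambda>u. deriv f (Complex u y)"
  have "((\<lambda>u. f (Complex u y)) has_vector_derivative ?G u) (at u within {s..t})" if "u \<in> {s..t}" for u
    using field_vector_diff_chain_at[OF has_vector_derivative_horizontal_line f_has_field_derivative, of u y]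
      that assms by (auto simp: o_def has_vector_derivative_at_within)
  then have "(?G has_integral (f (Complex t y) - f (Complex s y))) {s..t}"
    using fundamental_theorem_of_calculus[OF assms(2), of "\<lambda>u. f (Complex u y)" ?G] by auto
  moreover have int: "set_integrable lborel {s..t} ?G"
    using assms by (intro borel_integrable_atLeastAtMost' continuous_on_deriv_compose(1))
      (auto intro!: continuous_intros)
  ultimately have "(LINT u:{s..t}|lborel. ?G u) = f (Complex t y) - f (Complex s y)"
    by (simp add: set_borel_integral_eq_integral(2) integral_unique)
  then have "ennreal (norm (f (Complex t y) - f (Complex s y)))
      \<le> (\<integral>\<^sup>+u. norm (indicator {s..t} u *\<^sub>R ?G u) \<partial>lborel)"
    using integral_norm_bound_ennreal[OF int[unfolded set_integrable_def]]
    by (simp add: set_lebesgue_integral_def)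
  also have "\<dots> \<le> (\<integral>\<^sup>+u. deriv_sup f u * indicator {s..t} u \<partial>lborel)"
    using assms norm_deriv_le_deriv_sup
    by (intro nn_integral_mono) (auto split: split_indicator)
  finally show ?thesis .
qed

lemma norm_diff_horizontal_le:
  assumes "0 < s" "0 < t" "{min s t..max s t} \<subseteq> A" "0 \<le> e"
    and e: "(\<integral>\<^sup>+u. deriv_sup f u * indicator A u \<partial>lborel) \<le> ennreal e"
  shows "norm (f (Complex t y) - f (Complex s y)) \<le> e"
proof -
  have "ennreal (norm (f (Complex (max s t) y) - f (Complex (min s t) y)))
      \<le> (\<integral>\<^sup>+u. deriv_sup f u * indicator {min s t..max s t} u \<partial>lborel)"
    using assms by (intro norm_diff_horizontal_le_nn_integral) auto
  also have "\<dots> \<le> (\<integral>\<^sup>+u. deriv_sup f u * indicator A u \<partial>lborel)"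
    using assms(3) by (intro nn_integral_mono) (auto split: split_indicator)
  also have "\<dots> \<le> ennreal e"
    by (rule e)
  finally have "norm (f (Complex (max s t) y) - f (Complex (min s t) y)) \<le> e"
    using \<open>0 \<le> e\<close> by (simp add: ennreal_le_iff)
  then show ?thesis
    by (cases "s \<le> t") (simp_all add: max_def min_def norm_minus_commute)
qed

lemma norm_diff_vertical_le:
  assumes "0 < x" "0 \<le> c" and c: "deriv_sup f x = ennreal c"
  shows "norm (f (Complex x y) - f (Complex x y')) \<le> c * \<bar>y - y'\<bar>"
proof -
  let ?S = "closed_segment (Complex x y) (Complex x y')"
  have S: "Re w = x" if "w \<in> ?S" for w
    using that by (subst (asm) closed_segment_same_Re) auto
  have "norm (f (Complex x y) - f (Complex x y')) \<le> c * norm (Complex x y - Complex x y')"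
  proof (rule field_differentiable_bound[OF convex_closed_segment])
    fix w assume "w \<in> ?S"
    then have w: "w = Complex x (Im w)"
      using S by (simp add: complex_eq_iff)
    show "(f has_field_derivative deriv f w) (at w within ?S)"
      using f_has_field_derivative[of w] S \<open>w \<in> ?S\<close> \<open>0 < x\<close> by (simp add: has_field_derivative_at_within)
    have "ennreal (norm (deriv f w)) \<le> ennreal c"
      using norm_deriv_le_deriv_sup[OF \<open>0 < x\<close>, of f "Im w"] w c by simp
    then show "norm (deriv f w) \<le> c"
      using \<open>0 \<le> c\<close> by simp
  qed auto
  then show ?thesis
    by (simp add: cmod_def)
qed

lemma exists_vertical_difference_small:
  assumes "e > 0"
  shows "\<exists>X\<ge>N. 0 < X \<and> norm (f (Complex X y) - f (Complex X y')) < e"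
proof -
  obtain X where X: "max N (max 1 \<bar>y - y'\<bar>) \<le> X" "deriv_sup f X * ennreal X < ennreal e"
    using exists_large_point_small_product[OF deriv_sup_finite assms] by blast
  then have "deriv_sup f X \<noteq> \<infinity>"
    by (auto simp: ennreal_top_mult)
  then obtain c where c: "deriv_sup f X = ennreal c" "0 \<le> c"
    by (cases "deriv_sup f X") auto
  then have "c * X < e"
    using X by (simp add: ennreal_mult[symmetric] ennreal_less_iff)
  moreover have "norm (f (Complex X y) - f (Complex X y')) \<le> c * \<bar>y - y'\<bar>"
    using X c by (intro norm_diff_vertical_le) auto
  moreover have "c * \<bar>y - y'\<bar> \<le> c * X"
    using X c by (intro mult_left_mono) auto
  ultimately show ?thesis
    using X by (intro exI[of _ X]) auto
qed

lemma deriv_sup_tail_small: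
  assumes "e > 0"
  shows "\<exists>N. (\<integral>\<^sup>+u. deriv_sup f u * indicator {N..} u \<partial>lborel) < ennreal e"
proof -
  have "\<exists>i::nat. (\<integral>\<^sup>+u. deriv_sup f u * indicator {real i..} u \<partial>lborel) < ennreal e"
  proof (rule nn_integral_indicator_decseq_small[OF _ deriv_sup_finite])
    show "decseq (\<lambda>i::nat. {real i..})"
      by (auto simp: decseq_def)
    have "x \<notin> {real (nat \<lceil>x\<rceil> + 1)..}" for x :: real
      using real_nat_ceiling_ge[of x] by simp
    then show "(\<Inter>i::nat. {real i..}) = {}"
      by blast
  qed (use assms in auto)
  then show ?thesis
    by blast
qed

lemma deriv_sup_head_small:
  assumes "e > 0"
  shows "\<exists>d>0. (\<integral>\<^sup>+u. deriv_sup f u * indicator {0<..d} u \<partial>lborel) < ennreal e"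
proof -
  have "\<exists>i::nat. (\<integral>\<^sup>+u. deriv_sup f u * indicator {0<..1 / Suc i} u \<partial>lborel) < ennreal e"
  proof (rule nn_integral_indicator_decseq_small[OF _ deriv_sup_finite])
    show "decseq (\<lambda>i::nat. {0<..1 / Suc i})"
    proof (rule decseq_SucI)
      fix i :: nat
      have "1 / real (Suc (Suc i)) \<le> 1 / real (Suc i)"
        by (intro divide_left_mono) auto
      then show "{0<..1 / Suc (Suc i)} \<subseteq> {0<..1 / Suc i}"
        by auto
    qed
    have "\<exists>i::nat. x \<notin> {0<..1 / real (Suc i)}" for x :: real
    proof (cases "x > 0")
      case True
      then obtain n where "inverse (real (Suc n)) < x"
        using reals_Archimedean by blast
      then show ?thesis
        by (intro exI[of _ n]) (simp add: inverse_eq_divide)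
    qed auto
    then show "(\<Inter>i::nat. {0<..1 / real (Suc i)}) = {}"
      by blast
  qed (use assms in auto)
  then show ?thesis
    by (meson divide_pos_pos of_nat_0_less_iff zero_less_Suc zero_less_one)
qed

lemma norm_diff_le_via_vertical:
  assumes "0 < Re w" "0 < Re w'" "0 < X" "0 \<le> e"
    and "{min (Re w) X..max (Re w) X} \<subseteq> A" "{min (Re w') X..max (Re w') X} \<subseteq> A"
    and "(\<integral>\<^sup>+u. deriv_sup f u * indicator A u \<partial>lborel) \<le> ennreal e"
  shows "norm (f w - f w') \<le> 2 * e + norm (f (Complex X (Im w)) - f (Complex X (Im w')))"
proof -
  have "norm (f (Complex X (Im w)) - f (Complex (Re w) (Im w))) \<le> e"
    and "norm (f (Complex X (Im w')) - f (Complex (Re w') (Im w'))) \<le> e"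
    using assms by (intro norm_diff_horizontal_le; simp add: min.commute max.commute)+
  moreover have "norm (f w - f w') \<le> norm (f w - f (Complex X (Im w))) +
      norm (f (Complex X (Im w)) - f (Complex X (Im w'))) + norm (f (Complex X (Im w')) - f w')"
    by (rule norm_diff_triangle_le[OF norm_diff_triangle_le[OF order_refl order_refl] order_refl])
  ultimately show ?thesis
    by (simp add: norm_minus_commute)
qed

lemma bounded_on_C_plus: "\<exists>M. \<forall>w. 0 < Re w \<longrightarrow> norm (f w) \<le> M"
proof (intro exI allI impI)
  define B where "B = enn2real (\<integral>\<^sup>+x. deriv_sup f x \<partial>lborel)"
  have "(\<integral>\<^sup>+u. deriv_sup f u * indicator {0<..} u \<partial>lborel) \<le> (\<integral>\<^sup>+u. deriv_sup f u \<partial>lborel)"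
    by (intro nn_integral_mono) (simp split: split_indicator)
  also have "\<dots> = ennreal B"
    using deriv_sup_finite by (simp add: B_def ennreal_enn2real_if)
  finally have B: "(\<integral>\<^sup>+u. deriv_sup f u * indicator {0<..} u \<partial>lborel) \<le> ennreal B" .
  fix w assume w: "0 < Re w"
  obtain X where X: "0 < X" "norm (f (Complex X (Im w)) - f (Complex X (Im 1))) < 1"
    using exists_vertical_difference_small[of 1 0 "Im w" "Im 1"] by auto
  have "norm (f w - f 1) \<le> 2 * B + norm (f (Complex X (Im w)) - f (Complex X (Im 1)))"
    using w X B by (intro norm_diff_le_via_vertical) (auto simp: B_def)
  then show "norm (f w) \<le> norm (f 1) + 2 * B + 1"
    using X norm_triangle_ineq2[of "f w" "f 1"] by linarith
qed

lemma deriv_decay: "\<exists>C. \<forall>w. 0 < Re w \<longrightarrow> norm (deriv f w) \<le> C / Re w"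
  using bounded_on_C_plus norm_deriv_le_half_plane[OF holomorphic] by blast

lemma tendsto_f_infty: "(f \<longlongrightarrow> f_infty f) (filtercomap Re at_top)"
  unfolding f_infty_def
proof (rule tendsto_Lim_Cauchy)
  show "filtercomap Re at_top \<noteq> bot"
    by (rule filtercomap_neq_bot_surj) (auto simp: surj_Re)
  fix e :: real assume "e > 0"
  then obtain N where N: "(\<integral>\<^sup>+u. deriv_sup f u * indicator {N..} u \<partial>lborel) < ennreal (e / 4)"
    using deriv_sup_tail_small[of "e / 4"] by auto
  have "dist (f w) (f w') < e" if "max N 1 \<le> Re w" "max N 1 \<le> Re w'" for w w'
  proof -
    obtain X where X: "max (Re w) (Re w') \<le> X" "0 < X"
      "norm (f (Complex X (Im w)) - f (Complex X (Im w'))) < e / 4"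
      using exists_vertical_difference_small[of "e / 4" "max (Re w) (Re w')" "Im w" "Im w'"] \<open>e > 0\<close> by auto
    have "norm (f w - f w') \<le> 2 * (e / 4) + norm (f (Complex X (Im w)) - f (Complex X (Im w')))"
      using that X N \<open>e > 0\<close> by (intro norm_diff_le_via_vertical[where A = "{N..}"]) auto
    then show ?thesis
      using X(3) \<open>e > 0\<close> unfolding dist_norm by linarith
  qed
  then show "\<exists>P. eventually P (filtercomap Re at_top) \<and> (\<forall>w w'. P w \<and> P w' \<longrightarrow> dist (f w) (f w') < e)"
    by (intro exI[of _ "\<lambda>w. max N 1 \<le> Re w"])
      (auto simp: eventually_filtercomap_at_top_linorder simp del: max.bounded_iff)
qed

lemma boundary_limit:
  assumes z: "Re z = 0"
  shows "(f \<longlongrightarrow> Lim (at z within C_plus) f) (at z within C_plus)"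
proof (rule tendsto_Lim_Cauchy)
  have "z islimpt C_plus"
    unfolding islimpt_approachable
    by (intro allI impI bexI[of _ "z + of_real (e / 2)" for e]) (auto simp: z dist_norm)
  then show "at z within C_plus \<noteq> bot"
    by (simp add: trivial_limit_within)
  fix e :: real assume "e > 0"
  then obtain d where d: "0 < d" "(\<integral>\<^sup>+u. deriv_sup f u * indicator {0<..d} u \<partial>lborel) < ennreal (e / 4)"
    using deriv_sup_head_small[of "e / 4"] by auto
  obtain \<delta> where \<delta>: "0 < \<delta>"
    "\<And>v. dist v (Complex d (Im z)) < \<delta> \<Longrightarrow> dist (f v) (f (Complex d (Im z))) < e / 4"
    using f_isCont[of "Complex d (Im z)"] \<open>e > 0\<close> d(1) unfolding continuous_at_eps_delta
    by (metis complex.sel(1) zero_less_divide_iff zero_less_numeral)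
  have near: "dist (f (Complex d (Im w))) (f (Complex d (Im z))) < e / 4" if "dist w z < \<delta>" for w
  proof (rule \<delta>(2))
    have "dist (Complex d (Im w)) (Complex d (Im z)) = \<bar>Im (w - z)\<bar>"
      by (simp add: dist_norm cmod_def)
    then show "dist (Complex d (Im w)) (Complex d (Im z)) < \<delta>"
      using abs_Im_le_cmod[of "w - z"] that by (simp add: dist_norm)
  qed
  have "dist (f w) (f w') < e"
    if w: "0 < Re w" "dist w z < min d \<delta>" and w': "0 < Re w'" "dist w' z < min d \<delta>" for w w'
  proof -
    have "Re w < d" "Re w' < d"
      using w w' abs_Re_le_cmod[of "w - z"] abs_Re_le_cmod[of "w' - z"] z by (auto simp: dist_norm)
    then have "norm (f w - f w') \<le> 2 * (e / 4) + norm (f (Complex d (Im w)) - f (Complex d (Im w')))"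
      using w w' d \<open>e > 0\<close> by (intro norm_diff_le_via_vertical[where A = "{0<..d}"]) auto
    moreover have "norm (f (Complex d (Im w)) - f (Complex d (Im w'))) < e / 4 + e / 4"
      using near[of w] near[of w'] w w'
      by (intro norm_diff_triangle_less[where y = "f (Complex d (Im z))"]) (auto simp: dist_norm norm_minus_commute)
    ultimately show ?thesis
      by (simp add: dist_norm)
  qed
  then show "\<exists>P. eventually P (at z within C_plus) \<and> (\<forall>w w'. P w \<and> P w' \<longrightarrow> dist (f w) (f w') < e)"
    using d(1) \<delta>(1)
    by (intro exI[of _ "\<lambda>w. 0 < Re w \<and> dist w z < min d \<delta>"])
      (auto simp: eventually_at simp del: min_less_iff_conj intro!: exI[of _ "min d \<delta>"])
qed

lemma tendsto_ext_val:
  assumes "0 \<le> Re z"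
  shows "(f \<longlongrightarrow> ext_val f z) (at z within C_plus)"
proof (cases "Re z = 0")
  case True
  then show ?thesis
    using boundary_limit by (simp add: ext_val_def)
next
  case False
  then show ?thesis
    using assms f_isCont[of z] by (auto simp: ext_val_def isCont_def intro: tendsto_mono[OF at_le[OF subset_UNIV]])
qed

section \<open>The pairing with a resolvent\<close>

lemma pairing_inner_integral:
  assumes x: "0 < x" and z: "0 \<le> Re z"
  shows "integrable lborel (\<lambda>y. deriv (resolvent z) (Complex x (-y)) * deriv f (Complex x y))"
    and "(LINT y|lborel. deriv (resolvent z) (Complex x (-y)) * deriv f (Complex x y)) =
           2 * pi * deriv (deriv f) (of_real (2 * x) + z)"
proof -
  obtain C where C: "\<And>w. 0 < Re w \<Longrightarrow> norm (deriv f w) \<le> C / Re w"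
    using deriv_decay by blast
  define p where "p = of_real (2 * x) + z"
  have px: "x < Re p"
    using x z by (simp add: p_def)
  have eq: "deriv (resolvent z) (Complex x (-y)) * deriv f (Complex x y) =
      - (deriv f (Complex x y) / (Complex x y - p)^2)" for y
  proof -
    have "Complex x (-y) + z = - (Complex x y - p)"
      by (simp add: p_def complex_eq_iff)
    then have "(Complex x (-y) + z)^2 = (Complex x y - p)^2"
      by (simp add: power2_commute)
    moreover have "Complex x (-y) + z \<noteq> 0"
      using x z by (auto simp: complex_eq_iff)
    ultimately show ?thesis
      by (simp add: deriv_resolvent divide_inverse mult.commute)
  qed
  show "integrable lborel (\<lambda>y. deriv (resolvent z) (Complex x (-y)) * deriv f (Complex x y))"
    unfolding eq using integrable_vertical_Cauchy_integrand[OF deriv_holomorphic C x(1) px]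
    by (rule integrable_minus)
  show "(LINT y|lborel. deriv (resolvent z) (Complex x (-y)) * deriv f (Complex x y)) =
      2 * pi * deriv (deriv f) (of_real (2 * x) + z)"
    unfolding eq using vertical_line_Cauchy_integral[OF deriv_holomorphic C x(1) px]
    by (simp add: p_def)
qed

lemma norm_deriv2_le_deriv_sup:
  assumes x: "0 < x" and z: "0 \<le> Re z"
  shows "ennreal (2 * pi * norm (deriv (deriv f) (of_real (2 * x) + z)))
           \<le> deriv_sup f x * ennreal (pi / (x + Re z))"
proof -
  let ?h = "\<lambda>y. deriv (resolvent z) (Complex x (-y)) * deriv f (Complex x y)"
  define a where "a = x + Re z"
  have a: "0 < a"
    using x z by (simp add: a_def)
  have "ennreal (2 * pi * norm (deriv (deriv f) (of_real (2 * x) + z))) = ennreal (norm (LINT y|lborel. ?h y))"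
    using pairing_inner_integral(2)[OF x z] by (simp add: norm_mult)
  also have "\<dots> \<le> (\<integral>\<^sup>+y. norm (?h y) \<partial>lborel)"
    by (rule integral_norm_bound_ennreal[OF pairing_inner_integral(1)[OF x z]])
  also have "\<dots> \<le> (\<integral>\<^sup>+y. deriv_sup f x * ennreal (1 / (a^2 + (y - Im z)^2)) \<partial>lborel)"
  proof (rule nn_integral_mono)
    fix y
    have "Complex x (-y) + z \<noteq> 0"
      using x z by (auto simp: complex_eq_iff)
    moreover have "norm (Complex x (-y) + z)^2 = a^2 + (y - Im z)^2"
      unfolding a_def by (simp add: cmod_power2 power2_commute)
    ultimately have "norm (?h y) = norm (deriv f (Complex x y)) * (1 / (a^2 + (y - Im z)^2))"
      by (simp add: deriv_resolvent norm_mult norm_inverse norm_power divide_inverse)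
    moreover have "0 < a^2 + (y - Im z)^2"
      using a by (simp add: add_pos_nonneg)
    ultimately have "ennreal (norm (?h y)) =
        ennreal (norm (deriv f (Complex x y))) * ennreal (1 / (a^2 + (y - Im z)^2))"
      by (simp only: ennreal_mult norm_ge_zero less_imp_le zero_le_divide_1_iff)
    then show "ennreal (norm (?h y)) \<le> deriv_sup f x * ennreal (1 / (a^2 + (y - Im z)^2))"
      using norm_deriv_le_deriv_sup[OF x, of f y] by (simp add: mult_right_mono)
  qed
  also have "\<dots> = deriv_sup f x * ennreal (pi / a)"
    using Cauchy_kernel_integral(2)[OF a, of "Im z"] by (simp add: nn_integral_cmult)
  finally show ?thesis
    unfolding a_def .
qed

lemma norm_weighted_deriv2_le:
  assumes x: "0 < x" and z: "0 \<le> Re z"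
  shows "ennreal (norm (of_real x * deriv (deriv f) (of_real (2 * x) + z))) \<le> deriv_sup f x"
proof -
  define N where "N = norm (deriv (deriv f) (of_real (2 * x) + z))"
  have "ennreal (norm (of_real x * deriv (deriv f) (of_real (2 * x) + z))) =
      ennreal (x / (2 * pi)) * ennreal (2 * pi * N)"
    using x by (simp add: N_def norm_mult ennreal_mult[symmetric])
  also have "\<dots> \<le> ennreal (x / (2 * pi)) * (deriv_sup f x * ennreal (pi / (x + Re z)))"
    using norm_deriv2_le_deriv_sup[OF x z] unfolding N_def by (rule mult_left_mono) simp
  also have "\<dots> = deriv_sup f x * ennreal (x / (2 * (x + Re z)))"
    using x z by (simp add: ennreal_mult[symmetric] mult_ac add_nonneg_nonneg)
  also have "\<dots> \<le> deriv_sup f x * 1"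
    using x z by (intro mult_left_mono) (auto simp: ennreal_le_1)
  finally show ?thesis
    by simp
qed

lemma continuous_on_weighted_deriv2:
  assumes "0 \<le> Re z"
  shows "continuous_on {0<..} (\<lambda>x. of_real x * deriv (deriv f) (of_real (2 * x) + z))"
proof -
  have "continuous_on {0<..} (\<lambda>x::real. deriv (deriv f) (of_real (2 * x) + z))"
    by (rule continuous_on_deriv_compose(2)) (use assms in \<open>auto intro!: continuous_intros\<close>)
  then show ?thesis
    by (intro continuous_on_mult continuous_on_of_real continuous_on_id)
qed

lemma integrable_weighted_deriv2:
  assumes z: "0 \<le> Re z"
  shows "set_integrable lborel {0<..} (\<lambda>x. of_real x * deriv (deriv f) (of_real (2 * x) + z))"
  unfolding set_integrable_def
proof (rule integrableI_bounded)
  show "(\<lambda>x. indicator {0<..} x *\<^sub>R (of_real x * deriv (deriv f) (of_real (2 * x) + z)))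
      \<in> borel_measurable lborel"
    using borel_measurable_continuous_on_indicator[OF _ continuous_on_weighted_deriv2[OF z]] by simp
  have "(\<integral>\<^sup>+x. norm (indicator {0<..} x *\<^sub>R (of_real x * deriv (deriv f) (of_real (2 * x) + z))) \<partial>lborel)
      \<le> (\<integral>\<^sup>+x. deriv_sup f x \<partial>lborel)"
    using norm_weighted_deriv2_le[OF _ z] by (intro nn_integral_mono) (simp split: split_indicator)
  then show "(\<integral>\<^sup>+x. norm (indicator {0<..} x *\<^sub>R (of_real x * deriv (deriv f) (of_real (2 * x) + z))) \<partial>lborel)
      < \<infinity>"
    using deriv_sup_finite by (rule le_less_trans)
qed

lemma pairB_resolvent:
  assumes "0 \<le> Re z"
  shows "pairB (resolvent z) f =
    2 * pi * (LINT x:{0<..}|lborel. of_real x * deriv (deriv f) (of_real (2 * x) + z))"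
proof -
  have "pairB (resolvent z) f =
      (LINT x:{0<..}|lborel. 2 * pi * (of_real x * deriv (deriv f) (of_real (2 * x) + z)))"
    unfolding pairB_def using pairing_inner_integral(2) assms
    by (intro set_lebesgue_integral_cong) (auto simp: mult_ac)
  then show ?thesis
    by simp
qed

definition primitive :: "complex \<Rightarrow> real \<Rightarrow> complex" where
  "primitive z x = of_real x * deriv f (of_real (2 * x) + z) / 2 - f (of_real (2 * x) + z) / 4"

lemma weighted_deriv2_integral_Icc:
  assumes z: "0 \<le> Re z" and "0 < a" "a \<le> b"
  shows "(LINT x:{a..b}|lborel. of_real x * deriv (deriv f) (of_real (2 * x) + z)) =
    primitive z b - primitive z a"
proof -
  have "((\<lambda>x. of_real x * deriv (deriv f) (of_real (2 * x) + z)) has_integral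
      (primitive z b - primitive z a)) {a..b}"
  proof (rule fundamental_theorem_of_calculus[OF \<open>a \<le> b\<close>])
    fix x assume "x \<in> {a..b}"
    then have "0 < Re (of_real (2 * x) + z)"
      using assms by auto
    then have pos: "0 < Re (2 * of_real x + z)"
      by simp
    have lin: "((\<lambda>w. 2 * w + z) has_field_derivative 2) (at (of_real x))"
      by (auto intro!: derivative_eq_intros)
    have "((\<lambda>w. w * deriv f (2 * w + z) / 2 - f (2 * w + z) / 4) has_field_derivative
        (of_real x * (deriv (deriv f) (2 * of_real x + z) * 2) + 1 * deriv f (2 * of_real x + z)) / 2
          - deriv f (2 * of_real x + z) * 2 / 4) (at (of_real x))"
      by (intro DERIV_diff DERIV_cdivide DERIV_mult' DERIV_ident
          DERIV_chain2[OF f_has_field_derivative[OF pos] lin] DERIV_chain2[OF deriv_has_field_derivative[OF pos] lin])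
    then have H: "((\<lambda>w. w * deriv f (2 * w + z) / 2 - f (2 * w + z) / 4) has_field_derivative
        of_real x * deriv (deriv f) (of_real (2 * x) + z)) (at (of_real x))"
      by (rule DERIV_cong) (simp add: algebra_simps)
    have "primitive z = (\<lambda>t. (\<lambda>w. w * deriv f (2 * w + z) / 2 - f (2 * w + z) / 4) (of_real t))"
      by (simp add: fun_eq_iff primitive_def)
    then show "(primitive z has_vector_derivative of_real x * deriv (deriv f) (of_real (2 * x) + z))
        (at x within {a..b})"
      using has_vector_derivative_at_within[OF has_vector_derivative_real_field[OF H]] by simp
  qed
  moreover have "set_integrable lborel {a..b} (\<lambda>x. of_real x * deriv (deriv f) (of_real (2 * x) + z))"
    using assms by (intro borel_integrable_atLeastAtMost' continuous_on_subset[OF continuous_on_weighted_deriv2]) auto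
  ultimately show ?thesis
    by (simp add: set_borel_integral_eq_integral(2) integral_unique)
qed

lemma norm_scaled_deriv_less:
  assumes "0 \<le> t" "t \<le> T" "0 < T" and small: "deriv_sup f T * ennreal T < ennreal e"
  shows "norm (of_real t * deriv f (Complex T y)) < e"
proof -
  have "ennreal (norm (of_real t * deriv f (Complex T y))) = ennreal t * ennreal (norm (deriv f (Complex T y)))"
    using assms by (simp add: norm_mult ennreal_mult)
  also have "\<dots> \<le> deriv_sup f T * ennreal T"
    using assms norm_deriv_le_deriv_sup[of T f y] by (subst mult.commute) (intro mult_mono, auto)
  also have "\<dots> < ennreal e"
    by (rule small)
  finally show ?thesis
    by (subst (asm) ennreal_less_iff) auto
qed

lemma scaled_deriv_vanishing_at_0:
  assumes z: "0 \<le> Re z"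
  obtains a where "\<And>k. 0 < a k" "\<And>k. a k \<le> 1" "a \<longlonglongrightarrow> 0"
    "(\<lambda>k. of_real (a k) * deriv f (of_real (2 * a k) + z)) \<longlonglongrightarrow> 0"
proof (cases "Re z = 0")
  case True
  have "\<exists>t. 0 < t \<and> t < 1 / Suc k \<and> deriv_sup f t * ennreal t < ennreal (1 / Suc k)" for k
    by (rule exists_small_point_small_product[OF deriv_sup_finite]) auto
  then obtain T where T: "\<And>k. 0 < T k" "\<And>k. T k < 1 / Suc k"
    "\<And>k. deriv_sup f (T k) * ennreal (T k) < ennreal (1 / Suc k)"
    by metis
  have "of_real (2 * (T k / 2)) + z = Complex (T k) (Im z)" for k
    using True by (simp add: complex_eq_iff)
  then have bound: "norm (of_real (T k / 2) * deriv f (of_real (2 * (T k / 2)) + z)) < 1 / Suc k" for k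
    using norm_scaled_deriv_less[of "T k / 2" "T k" "1 / Suc k" "Im z"] T(1,3)[of k] by simp
  have le: "T k / 2 \<le> 1" "norm (T k / 2) \<le> 1 / Suc k" for k
  proof -
    have "1 / real (Suc k) \<le> 1" "norm (T k / 2) = T k / 2"
      using T(1)[of k] by simp_all
    then show "T k / 2 \<le> 1" "norm (T k / 2) \<le> 1 / Suc k"
      using T(1,2)[of k] by linarith+
  qed
  have lim: "(\<lambda>k. 1 / real (Suc k)) \<longlonglongrightarrow> 0"
    by real_asymp
  show thesis
  proof (rule that[of "\<lambda>k. T k / 2"])
    show "0 < T k / 2" "T k / 2 \<le> 1" for k
      using T(1)[of k] le(1)[of k] by simp_all
    show "(\<lambda>k. T k / 2) \<longlonglongrightarrow> 0"
      by (rule Lim_null_comparison[OF always_eventually[OF allI[OF le(2)]] lim])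
    show "(\<lambda>k. of_real (T k / 2) * deriv f (of_real (2 * (T k / 2)) + z)) \<longlonglongrightarrow> 0"
      by (rule Lim_null_comparison[OF always_eventually[OF allI[OF less_imp_le[OF bound]]] lim])
  qed
next
  case False
  have "isCont (deriv f) z"
    using False z holomorphic_on_imp_continuous_on[OF deriv_holomorphic] open_C_plus
    by (simp add: continuous_on_eq_continuous_at)
  moreover have lim: "(\<lambda>k. 1 / real (Suc k)) \<longlonglongrightarrow> 0"
    by real_asymp
  have "(\<lambda>k. of_real (2 * (1 / real (Suc k))) + z) \<longlonglongrightarrow> z"
    using tendsto_add[OF tendsto_of_real[OF tendsto_mult[OF tendsto_const[of "2::real"] lim]] tendsto_const[of z]]
    by simp
  ultimately have "(\<lambda>k. deriv f (of_real (2 * (1 / real (Suc k))) + z)) \<longlonglongrightarrow> deriv f z"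
    by (rule isCont_tendsto_compose)
  then have "(\<lambda>k. of_real (1 / real (Suc k)) * deriv f (of_real (2 * (1 / real (Suc k))) + z))
      \<longlonglongrightarrow> of_real 0 * deriv f z"
    using lim by (intro tendsto_intros)
  then show thesis
    using lim by (intro that[of "\<lambda>k. 1 / real (Suc k)"]) auto
qed

lemma scaled_deriv_vanishing_at_top:
  assumes z: "0 \<le> Re z"
  obtains b where "\<And>k. 1 \<le> b k" "filterlim b at_top sequentially"
    "(\<lambda>k. of_real (b k) * deriv f (of_real (2 * b k) + z)) \<longlonglongrightarrow> 0"
proof -
  have "\<exists>t\<ge>2 * Suc k + Re z. deriv_sup f t * ennreal t < ennreal (1 / Suc k)" for k
    by (rule exists_large_point_small_product[OF deriv_sup_finite]) auto
  then obtain T where T: "\<And>k. 2 * Suc k + Re z \<le> T k"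
    "\<And>k. deriv_sup f (T k) * ennreal (T k) < ennreal (1 / Suc k)"
    by metis
  define b where "b k = (T k - Re z) / 2" for k
  have b: "real k + 1 \<le> b k" for k
    using T(1)[of k] by (simp add: b_def)
  have "0 \<le> b k" "b k \<le> T k" "0 < T k" "of_real (2 * b k) + z = Complex (T k) (Im z)" for k
    using b[of k] T(1)[of k] z by (auto simp: b_def complex_eq_iff field_simps)
  then have bound: "norm (of_real (b k) * deriv f (of_real (2 * b k) + z)) < 1 / Suc k" for k
    using norm_scaled_deriv_less[of "b k" "T k" "1 / Suc k" "Im z"] T(2)[of k] by simp
  have lim: "(\<lambda>k. 1 / real (Suc k)) \<longlonglongrightarrow> 0"
    by real_asymp
  show thesis
  proof (rule that[of b])
    show "1 \<le> b k" for k
      using b[of k] by simp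
    have "real k \<le> b k" for k
      using b[of k] by simp
    then show "filterlim b at_top sequentially"
      by (intro filterlim_at_top_mono[OF filterlim_real_sequentially always_eventually] allI)
    show "(\<lambda>k. of_real (b k) * deriv f (of_real (2 * b k) + z)) \<longlonglongrightarrow> 0"
      by (rule Lim_null_comparison[OF always_eventually[OF allI[OF less_imp_le[OF bound]]] lim])
  qed
qed

lemma primitive_tendsto_at_0:
  assumes z: "0 \<le> Re z"
  obtains a where "\<And>k. 0 < a k" "\<And>k. a k \<le> 1" "a \<longlonglongrightarrow> 0"
    "(\<lambda>k. primitive z (a k)) \<longlonglongrightarrow> - ext_val f z / 4"
proof -
  obtain a where a: "\<And>k. 0 < a k" "\<And>k. a k \<le> 1" "a \<longlonglongrightarrow> 0"
    "(\<lambda>k. of_real (a k) * deriv f (of_real (2 * a k) + z)) \<longlonglongrightarrow> 0"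
    using scaled_deriv_vanishing_at_0[OF z] by blast
  have "(\<lambda>k. of_real (2 * a k) + z) \<longlonglongrightarrow> of_real (2 * 0) + z"
    by (intro tendsto_intros a(3))
  moreover have "\<forall>\<^sub>F k in sequentially. of_real (2 * a k) + z \<in> C_plus - {z}"
  proof (intro always_eventually allI)
    fix k
    show "of_real (2 * a k) + z \<in> C_plus - {z}"
      using a(1)[of k] z by (auto simp: add_pos_nonneg)
  qed
  ultimately have "filterlim (\<lambda>k. of_real (2 * a k) + z) (at z within C_plus) sequentially"
    by (simp add: filterlim_at)
  from filterlim_compose[OF tendsto_ext_val[OF z] this]
  have "(\<lambda>k. primitive z (a k)) \<longlonglongrightarrow> 0 / 2 - ext_val f z / 4"
    unfolding primitive_def by (intro tendsto_intros a(4)) simp_all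
  then show thesis
    using a(1-3) by (intro that) auto
qed

lemma primitive_tendsto_at_top:
  assumes z: "0 \<le> Re z"
  obtains b where "\<And>k. 1 \<le> b k" "filterlim b at_top sequentially"
    "(\<lambda>k. primitive z (b k)) \<longlonglongrightarrow> - f_infty f / 4"
proof -
  obtain b where b: "\<And>k. 1 \<le> b k" "filterlim b at_top sequentially"
    "(\<lambda>k. of_real (b k) * deriv f (of_real (2 * b k) + z)) \<longlonglongrightarrow> 0"
    using scaled_deriv_vanishing_at_top[OF z] by blast
  have "b k \<le> Re (of_real (2 * b k) + z)" for k
    using b(1)[of k] z by simp
  then have "filterlim (\<lambda>k. of_real (2 * b k) + z) (filtercomap Re at_top) sequentially"
    unfolding filterlim_filtercomap_iff o_def
    by (intro filterlim_at_top_mono[OF b(2) always_eventually] allI)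
  from filterlim_compose[OF tendsto_f_infty this]
  have "(\<lambda>k. primitive z (b k)) \<longlonglongrightarrow> 0 / 2 - f_infty f / 4"
    unfolding primitive_def by (intro tendsto_intros b(3)) simp_all
  then show thesis
    using b(1,2) by (intro that) auto
qed

lemma integral_weighted_deriv2:
  assumes z: "0 \<le> Re z"
  shows "(LINT x:{0<..}|lborel. of_real x * deriv (deriv f) (of_real (2 * x) + z)) =
    (ext_val f z - f_infty f) / 4"
proof -
  obtain a where a: "\<And>k. 0 < a k" "\<And>k. a k \<le> 1" "a \<longlonglongrightarrow> 0"
    "(\<lambda>k. primitive z (a k)) \<longlonglongrightarrow> - ext_val f z / 4"
    using primitive_tendsto_at_0[OF z] by blast
  obtain b where b: "\<And>k. 1 \<le> b k" "filterlim b at_top sequentially"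
    "(\<lambda>k. primitive z (b k)) \<longlonglongrightarrow> - f_infty f / 4"
    using primitive_tendsto_at_top[OF z] by blast
  have "(\<lambda>k. LINT x:{a k..b k}|lborel. of_real x * deriv (deriv f) (of_real (2 * x) + z))
      \<longlonglongrightarrow> (LINT x:{0<..}|lborel. of_real x * deriv (deriv f) (of_real (2 * x) + z))"
  proof (rule tendsto_set_integral_Icc[OF integrable_weighted_deriv2[OF z]])
    show "{a k..b k} \<subseteq> {0<..}" for k
      using a(1)[of k] by auto
    show "\<forall>\<^sub>F k in sequentially. a k \<le> x \<and> x \<le> b k" if "x \<in> {0<..}" for x
    proof -
      have "\<forall>\<^sub>F k in sequentially. a k < x"
        using order_tendstoD(2)[OF a(3)] that by simp
      moreover have "\<forall>\<^sub>F k in sequentially. x \<le> b k"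
        using b(2) by (simp add: filterlim_at_top)
      ultimately show ?thesis
        by eventually_elim simp
    qed
  qed
  moreover have "(LINT x:{a k..b k}|lborel. of_real x * deriv (deriv f) (of_real (2 * x) + z)) =
      primitive z (b k) - primitive z (a k)" for k
    using a(1,2)[of k] b(1)[of k] by (intro weighted_deriv2_integral_Icc[OF z]) auto
  ultimately have "(\<lambda>k. primitive z (b k) - primitive z (a k))
      \<longlonglongrightarrow> (LINT x:{0<..}|lborel. of_real x * deriv (deriv f) (of_real (2 * x) + z))"
    by simp
  moreover have "(\<lambda>k. primitive z (b k) - primitive z (a k)) \<longlonglongrightarrow> - f_infty f / 4 - - ext_val f z / 4"
    using a(4) b(3) by (rule tendsto_diff[rotated])
  ultimately show ?thesis
    by (auto dest: LIMSEQ_unique simp: field_simps)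
qed

end

theorem proposition2p20:
  fixes f :: "complex \<Rightarrow> complex" and z :: complex
  assumes "in_B f" and "Re z \<ge> 0"
  shows "ext_val f z = f_infty f + of_real (2 / pi) * pairB (resolvent z) f"
proof -
  interpret B_function f
    by unfold_locales (rule assms(1))
  have "of_real (2 / pi) * pairB (resolvent z) f =
      (of_real (2 / pi) * of_real (2 * pi)) * ((ext_val f z - f_infty f) / 4)"
    by (simp only: pairB_resolvent[OF assms(2)] integral_weighted_deriv2[OF assms(2)] mult.assoc)
  also have "(of_real (2 / pi) :: complex) * of_real (2 * pi) = 4"
  proof -
    have "2 / pi * (2 * pi) = (4 :: real)"
      by simp
    then show ?thesis
      by (metis of_real_mult of_real_numeral)
  qed
  also have "4 * ((ext_val f z - f_infty f) / 4) = ext_val f z - f_infty f"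
    by simp
  finally have "of_real (2 / pi) * pairB (resolvent z) f = ext_val f z - f_infty f" .
  then show ?thesis
    by simp
qed

end
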